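(* Let $A=(a_{ij})_{i,j=1}^n$ be a (row) stochastic matrix, i.e. $a_{ij}\ge 0$ and $\sum_{j=1}^n a_{ij}=1$ for every $i$. Then \[ \operatorname{Per}(A)\ \le\ 2^n\cdot\prod_{i,j=1}^n (1-a_{ij})^{1-a_{ij}}. \]
   Context: $\operatorname{Per}(A)=\sum_{\sigma\in S_n}\prod_{i=1}^n a_{i\sigma(i)}$ is the permanent. Convention: $0^0=1$. *)

theory Defs
  imports "HOL-Analysis.Analysis" "HOL-Combinatorics.Permutations"
begin

definition per :: "nat \<Rightarrow> (nat \<Rightarrow> nat \<Rightarrow> real) \<Rightarrow> real" where
  "per n A = (\<Sum>\<sigma> | \<sigma> permutes {0..<n}. \<Prod>i<n. A i (\<sigma> i))"

definition rpow :: "real \<Rightarrow> real \<Rightarrow> real" where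
  "rpow x y = (if x = 0 then (if y = 0 then 1 else 0) else x powr y)"

end

theory Submission
  imports Defs
begin

text \<open>
  Expanding the permanent along its rows and comparing "each row picks one column" with "each
  row picks its columns independently" gives Per(A) <= prod_k q_k, where q_k is the probability
  that at most one of independent events with probabilities a_1k, ..., a_nk occurs. For
  probabilities c_i < 1 with odds u_i = c_i / (1 - c_i) one has
  q = prod_i (1 - c_i) * (1 + sum_i u_i). A subadditive potential K with
  ln ((1 + U) / 2) + 1/2 <= K U and K u_i <= c_i / 2 - c_i ln (1 - c_i) turns this into
  q <= 2 exp ((sum_i c_i - 1) / 2) * prod_i (1 - c_i)^(1 - c_i); over all columns the
  exponentials cancel, since the column sums add up to n.
\<close>

text \<open>The two branches meet at U = 1 with equal values and slopes, so the potential is concave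
  with value 0 at 0, hence subadditive.\<close>
definition potential :: "real \<Rightarrow> real" where
  "potential U = (if U \<le> 1 then U / 2 else ln ((1 + U) / 2) + 1 / 2)"

lemma ln_half_le_half:
  fixes U :: real assumes "0 \<le> U" shows "ln ((1 + U) / 2) + 1 / 2 \<le> U / 2"
  using ln_le_minus_one[of "(1 + U) / 2"] assms by simp

lemma ln_half_le_potential:
  fixes U :: real assumes "0 \<le> U" shows "ln ((1 + U) / 2) + 1 / 2 \<le> potential U"
  using ln_half_le_half[OF assms] by (simp add: potential_def)

lemma potential_le_half:
  fixes U :: real assumes "0 \<le> U" shows "potential U \<le> U / 2"
  using ln_half_le_half[OF assms] by (simp add: potential_def)

lemma ln_one_plus_half_le_potential:
  fixes u :: real assumes "0 \<le> u" shows "ln (1 + u / 2) \<le> potential u"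
proof (cases "u \<le> 1")
  case True
  then show ?thesis using ln_add_one_self_le_self[of "u / 2"] assms by (simp add: potential_def)
next
  case False
  have "ln ((2 + u) / (1 + u)) \<le> (2 + u) / (1 + u) - 1"
    using assms by (intro ln_le_minus_one) simp
  also have "\<dots> \<le> 1 / 2" using False by (simp add: field_simps)
  finally have "ln ((2 + u) / (1 + u)) \<le> 1 / 2" .
  moreover have "ln (1 + u / 2) = ln ((1 + u) / 2) + ln ((2 + u) / (1 + u))"
  proof -
    have "1 + u / 2 = (1 + u) / 2 * ((2 + u) / (1 + u))" using assms by (simp add: field_simps)
    then show ?thesis using assms by (simp only:) (rule ln_mult_pos; simp)
  qed
  ultimately show ?thesis using False by (simp add: potential_def)
qed

lemma potential_add_le_of_gt1:
  fixes U u :: real assumes "1 < U" "0 \<le> u"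
  shows "potential (U + u) \<le> potential U + potential u"
proof -
  have "potential (U + u) - potential U = ln ((1 + U + u) / 2) - ln ((1 + U) / 2)"
    using assms by (simp add: potential_def add.assoc)
  also have "\<dots> = ln ((1 + U + u) / 2 / ((1 + U) / 2))"
    using assms by (intro ln_divide_pos[symmetric]) auto
  also have "\<dots> = ln (1 + u / (1 + U))"
    using assms by (simp add: field_simps)
  also have "\<dots> \<le> ln (1 + u / 2)"
  proof -
    have "u / (1 + U) \<le> u / 2" using assms by (intro divide_left_mono) auto
    then show ?thesis using assms by (simp add: add_pos_nonneg)
  qed
  also have "\<dots> \<le> potential u" by (rule ln_one_plus_half_le_potential[OF assms(2)])
  finally show ?thesis by simp
qed

lemma potential_add_le:
  fixes U u :: real assumes "0 \<le> U" "0 \<le> u"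
  shows "potential (U + u) \<le> potential U + potential u"
proof -
  consider "U \<le> 1" "u \<le> 1" | "1 < U" | "1 < u" by linarith
  then show ?thesis
  proof cases
    case 1
    then show ?thesis
      using potential_le_half[of "U + u"] assms by (simp add: potential_def)
  next
    case 2
    then show ?thesis using potential_add_le_of_gt1 assms by blast
  next
    case 3
    then show ?thesis using potential_add_le_of_gt1[of u U] assms by (simp add: add.commute)
  qed
qed

lemma potential_sum_le:
  assumes "finite I" "\<And>i. i \<in> I \<Longrightarrow> 0 \<le> u i"
  shows "potential (\<Sum>i\<in>I. u i) \<le> (\<Sum>i\<in>I. potential (u i))"
  using assms
proof (induction I rule: finite_induct)
  case empty
  then show ?case by (simp add: potential_def)
next
  case (insert x I)
  have "potential (\<Sum>i\<in>insert x I. u i) \<le> potential (u x) + potential (\<Sum>i\<in>I. u i)"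
    using insert by (simp add: potential_add_le sum_nonneg)
  also have "\<dots> \<le> (\<Sum>i\<in>insert x I. potential (u i))"
    using insert by simp
  finally show ?case .
qed

lemma one_plus_le_exp_potential:
  fixes U :: real assumes "0 \<le> U" shows "1 + U \<le> 2 * exp (potential U - 1 / 2)"
proof -
  have "(1 + U) / 2 = exp (ln ((1 + U) / 2))" using assms by simp
  also have "\<dots> \<le> exp (potential U - 1 / 2)"
    using ln_half_le_potential[OF assms] by simp
  finally show ?thesis by simp
qed

lemma potential_odds_le:
  fixes c :: real assumes "0 \<le> c" "c < 1"
  shows "potential (c / (1 - c)) \<le> c / 2 - c * ln (1 - c)"
proof (cases "c \<le> 1 / 2")
  case True
  have "c \<le> - ln (1 - c)" using ln_le_minus_one[of "1 - c"] assms by simp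
  then have "c * c \<le> c * - ln (1 - c)" using assms by (intro mult_left_mono)
  moreover have "c / (1 - c) \<le> 1" using True assms by (simp add: field_simps)
  moreover have "c / (1 - c) / 2 \<le> c / 2 + c * c"
    using True assms mult_left_mono[of "2 * c" 1 "c * c"] by (simp add: field_simps)
  ultimately show ?thesis unfolding potential_def by simp
next
  case False
  define x where "x = 1 - c"
  have x: "0 < x" "x < 1 / 2" using assms False by (simp_all add: x_def)
  have "ln (1 / (2 * x)) \<le> 1 / (2 * x) - 1" using x by (intro ln_le_minus_one) simp
  then have "- ln x \<le> ln 2 + 1 / (2 * x) - 1" using x by (simp add: ln_div ln_mult)
  then have "x * - ln x \<le> x * (ln 2 + 1 / (2 * x) - 1)" using x by (intro mult_left_mono) auto
  moreover have "x * (1 / (2 * x)) = 1 / 2" using x by simp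
  ultimately have "- (x * ln x) \<le> x * ln 2 + 1 / 2 - x" by (simp add: algebra_simps)
  moreover have "1 / 2 - x / 2 \<le> ln 2 - x * ln 2"
  proof -
    have "(1 - x) * (1 / 2) \<le> (1 - x) * ln 2"
      using ln2_ge_two_thirds x by (intro mult_left_mono) auto
    then show ?thesis by (simp add: left_diff_distrib)
  qed
  moreover have "potential (c / (1 - c)) = - ln x - ln 2 + 1 / 2"
  proof -
    have "1 + c / (1 - c) = 1 / x" "1 < c / (1 - c)" using x by (simp_all add: x_def field_simps)
    then show ?thesis using x by (simp add: potential_def ln_div ln_mult)
  qed
  moreover have "c / 2 - c * ln (1 - c) = 1 / 2 - x / 2 - ln x + x * ln x"
    by (simp add: x_def field_simps)
  ultimately show ?thesis by linarith
qed

text \<open>The probability that at most one of independent events with probabilities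
  c 0, ..., c (m - 1) occurs.\<close>
fun prob_at_most_one :: "(nat \<Rightarrow> real) \<Rightarrow> nat \<Rightarrow> real" where
  "prob_at_most_one c 0 = 1"
| "prob_at_most_one c (Suc m) = (1 - c m) * prob_at_most_one c m + c m * (\<Prod>i<m. 1 - c i)"

lemma prod_one_minus_le_prob_at_most_one:
  assumes "\<And>i. i < m \<Longrightarrow> 0 \<le> c i \<and> c i \<le> 1"
  shows "(\<Prod>i<m. 1 - c i) \<le> prob_at_most_one c m"
  using assms
proof (induction m)
  case 0
  then show ?case by simp
next
  case (Suc m)
  have "0 \<le> c m" "c m \<le> 1" using Suc.prems by auto
  moreover have "0 \<le> (\<Prod>i<m. 1 - c i)" using Suc.prems by (intro prod_nonneg) auto
  moreover have "(\<Prod>i<m. 1 - c i) \<le> prob_at_most_one c m" using Suc by simp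
  ultimately have "(1 - c m) * (\<Prod>i<m. 1 - c i) \<le> (1 - c m) * prob_at_most_one c m"
    and "0 \<le> c m * (\<Prod>i<m. 1 - c i)"
    by (simp_all add: mult_left_mono)
  then show ?case by (simp add: mult.commute)
qed

lemma prob_at_most_one_nonneg:
  assumes "\<And>i. i < m \<Longrightarrow> 0 \<le> c i \<and> c i \<le> 1"
  shows "0 \<le> prob_at_most_one c m"
proof -
  have "0 \<le> (\<Prod>i<m. 1 - c i)" using assms by (intro prod_nonneg) auto
  also have "\<dots> \<le> prob_at_most_one c m" by (rule prod_one_minus_le_prob_at_most_one[OF assms])
  finally show ?thesis .
qed

lemma prob_at_most_one_eq:
  assumes "\<And>i. i < m \<Longrightarrow> c i \<noteq> 1"
  shows "prob_at_most_one c m = (\<Prod>i<m. 1 - c i) * (1 + (\<Sum>i<m. c i / (1 - c i)))"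
  using assms
proof (induction m)
  case 0
  then show ?case by simp
next
  case (Suc m)
  then have "1 - c m \<noteq> 0" by simp
  with Suc show ?case by (simp add: field_simps)
qed

lemma rpow_nonneg: "0 \<le> rpow x y"
  by (simp add: rpow_def)

lemma rpow_self_eq:
  fixes c :: real assumes "c < 1"
  shows "rpow (1 - c) (1 - c) = (1 - c) * exp (- c * ln (1 - c))"
proof -
  have "rpow (1 - c) (1 - c) = exp (ln (1 - c) + - c * ln (1 - c))"
    using assms by (simp add: rpow_def powr_def algebra_simps)
  then show ?thesis using assms by (simp add: exp_diff exp_minus field_simps)
qed

lemma one_minus_le_rpow_self:
  fixes c :: real assumes "0 \<le> c" "c \<le> 1"
  shows "1 - c \<le> rpow (1 - c) (1 - c)"
proof (cases "c = 1")
  case True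
  then show ?thesis by (simp add: rpow_def)
next
  case False
  with assms have "c < 1" by simp
  then have "0 \<le> - c * ln (1 - c)" using assms by (simp add: mult_nonneg_nonpos)
  with \<open>c < 1\<close> show ?thesis
    using rpow_self_eq[OF \<open>c < 1\<close>] mult_left_mono[of 1 "exp (- c * ln (1 - c))" "1 - c"] by simp
qed

lemma prob_at_most_one_le_of_less_one:
  assumes "\<And>i. i < m \<Longrightarrow> 0 \<le> c i \<and> c i < 1"
  shows "prob_at_most_one c m
    \<le> 2 * exp (((\<Sum>i<m. c i) - 1) / 2) * (\<Prod>i<m. rpow (1 - c i) (1 - c i))"
proof -
  define u where "u i = c i / (1 - c i)" for i
  define P where "P = (\<Prod>i<m. 1 - c i)"
  define G where "G = (\<Sum>i<m. - c i * ln (1 - c i))"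
  have u: "0 \<le> u i" if "i < m" for i using assms[OF that] by (simp add: u_def)
  have "0 \<le> P" unfolding P_def using assms by (intro prod_nonneg) (auto simp: less_imp_le)
  have "potential (\<Sum>i<m. u i) \<le> (\<Sum>i<m. potential (u i))"
    using u by (intro potential_sum_le) auto
  also have "\<dots> \<le> (\<Sum>i<m. c i / 2 - c i * ln (1 - c i))"
    unfolding u_def using assms by (intro sum_mono potential_odds_le) auto
  also have "\<dots> = (\<Sum>i<m. c i) / 2 + G"
    by (simp add: G_def sum_subtractf sum_divide_distrib sum_negf)
  finally have pot: "potential (\<Sum>i<m. u i) - 1 / 2 \<le> ((\<Sum>i<m. c i) - 1) / 2 + G"
    by (simp add: diff_divide_distrib)
  have "prob_at_most_one c m = P * (1 + (\<Sum>i<m. u i))"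
    unfolding P_def u_def using assms by (intro prob_at_most_one_eq) fastforce
  also have "\<dots> \<le> P * (2 * exp (potential (\<Sum>i<m. u i) - 1 / 2))"
    using \<open>0 \<le> P\<close> u by (intro mult_left_mono one_plus_le_exp_potential sum_nonneg) auto
  also have "\<dots> \<le> P * (2 * exp (((\<Sum>i<m. c i) - 1) / 2 + G))"
    using \<open>0 \<le> P\<close> pot by (intro mult_left_mono) auto
  also have "\<dots> = 2 * exp (((\<Sum>i<m. c i) - 1) / 2) * (P * exp G)"
    by (simp add: exp_add)
  also have "P * exp G = (\<Prod>i<m. rpow (1 - c i) (1 - c i))"
    unfolding P_def G_def using assms by (simp add: exp_sum prod.distrib[symmetric] rpow_self_eq)
  finally show ?thesis .
qed

lemma prob_at_most_one_le:
  assumes "\<And>i. i < m \<Longrightarrow> 0 \<le> c i \<and> c i \<le> 1"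
  shows "prob_at_most_one c m
    \<le> 2 * exp (((\<Sum>i<m. c i) - 1) / 2) * (\<Prod>i<m. rpow (1 - c i) (1 - c i))"
  using assms
proof (induction m)
  case 0
  then show ?case using prob_at_most_one_le_of_less_one[of 0 c] by simp
next
  case (Suc m)
  define S where "S = (\<Sum>i<m. c i)"
  define F where "F = (\<Prod>i<m. rpow (1 - c i) (1 - c i))"
  have c: "0 \<le> c i" "c i \<le> 1" if "i < Suc m" for i using Suc.prems[OF that] by auto
  have "0 \<le> S" unfolding S_def using c by (intro sum_nonneg) auto
  have "0 \<le> F" unfolding F_def by (intro prod_nonneg) (simp add: rpow_nonneg)
  consider "\<forall>i<Suc m. c i < 1" | "c m = 1" | j where "j < m" "c j = 1"
    using c by (metis le_less less_Suc_eq)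
  then show ?case
  proof cases
    case 1
    then show ?thesis using c by (intro prob_at_most_one_le_of_less_one) auto
  next
    case 2
    have "prob_at_most_one c (Suc m) = (\<Prod>i<m. 1 - c i)" using 2 by simp
    also have "\<dots> \<le> F"
      unfolding F_def using c by (intro prod_mono conjI one_minus_le_rpow_self) auto
    also have "\<dots> \<le> 2 * exp (S / 2) * F"
    proof -
      have "1 \<le> exp (S / 2)" using \<open>0 \<le> S\<close> by simp
      then have "1 \<le> 2 * exp (S / 2)" by linarith
      then have "1 * F \<le> 2 * exp (S / 2) * F" using \<open>0 \<le> F\<close> by (rule mult_right_mono)
      then show ?thesis by simp
    qed
    finally show ?thesis using 2 by (simp add: S_def F_def rpow_def)
  next
    case 3
    then have "(\<Prod>i<m. 1 - c i) = 0" by (auto intro: prod_zero)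
    then have "prob_at_most_one c (Suc m) = (1 - c m) * prob_at_most_one c m" by simp
    also have "\<dots> \<le> rpow (1 - c m) (1 - c m) * (2 * exp ((S - 1) / 2) * F)"
      using Suc c by (intro mult_mono one_minus_le_rpow_self rpow_nonneg prob_at_most_one_nonneg)
        (auto simp: S_def F_def)
    also have "\<dots> \<le> rpow (1 - c m) (1 - c m) * (2 * exp ((S + c m - 1) / 2) * F)"
      using c \<open>0 \<le> F\<close>
      by (intro mult_left_mono mult_right_mono rpow_nonneg) (auto simp: divide_right_mono)
    finally show ?thesis by (simp add: S_def F_def mult_ac)
  qed
qed

lemma per_0: "per 0 B = 1"
  by (simp add: per_def permutes_empty)

lemma per_Suc:
  "per (Suc m) B = (\<Sum>b<Suc m. B m b * per m (\<lambda>i j. B i (Transposition.transpose m b j)))"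
proof -
  have ins: "{0..<Suc m} = insert m {0..<m}" by auto
  have "per (Suc m) B = (\<Sum>b\<in>insert m {0..<m}. \<Sum>q | q permutes {0..<m}.
      \<Prod>i<Suc m. B i ((Transposition.transpose m b \<circ> q) i))"
    unfolding per_def ins by (rule sum_over_permutations_insert) auto
  also have "\<dots> = (\<Sum>b\<in>insert m {0..<m}. \<Sum>q | q permutes {0..<m}.
      B m b * (\<Prod>i<m. B i (Transposition.transpose m b (q i))))"
  proof (intro sum.cong refl)
    fix b q assume "q \<in> {q. q permutes {0..<m}}"
    then have "q m = m" by (auto intro: permutes_not_in)
    then show "(\<Prod>i<Suc m. B i ((Transposition.transpose m b \<circ> q) i))
        = B m b * (\<Prod>i<m. B i (Transposition.transpose m b (q i)))"
      by (simp add: mult.commute)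
  qed
  also have "\<dots> = (\<Sum>b<Suc m. B m b * per m (\<lambda>i j. B i (Transposition.transpose m b j)))"
    unfolding per_def by (simp add: sum_distrib_left lessThan_Suc ins[symmetric] atLeast0LessThan)
  finally show ?thesis .
qed

text \<open>Probabilistically: on the left at most one index j is chosen (with probability a j), and it
  gets weight q while all others get p; on the right every index is chosen independently.\<close>
lemma single_choice_le_independent_choice:
  fixes a p q :: "'a \<Rightarrow> real"
  assumes "finite I" "\<And>k. k \<in> I \<Longrightarrow> 0 \<le> a k \<and> 0 \<le> q k \<and> q k \<le> p k" "sum a I \<le> 1"
  shows "(1 - sum a I) * prod p I + (\<Sum>j\<in>I. a j * q j * prod p (I - {j}))
         \<le> (\<Prod>k\<in>I. (1 - a k) * p k + a k * q k)"
  using assms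
proof (induction I rule: finite_induct)
  case empty
  then show ?case by simp
next
  case (insert x I)
  define S where "S = sum a I"
  define P where "P = prod p I"
  define T where "T = (\<Sum>j\<in>I. a j * q j * prod p (I - {j}))"
  have x: "0 \<le> a x" "0 \<le> q x" "q x \<le> p x" using insert.prems by auto
  have "a x + S \<le> 1" using insert by (simp add: S_def)
  then have "S \<le> 1" using x by linarith
  then have IH: "(1 - S) * P + T \<le> (\<Prod>k\<in>I. (1 - a k) * p k + a k * q k)"
    unfolding S_def P_def T_def using insert.prems by (intro insert.IH) auto
  have "T \<le> (\<Sum>j\<in>I. a j * p j * prod p (I - {j}))"
    unfolding T_def using insert.prems
    by (intro sum_mono mult_right_mono mult_left_mono prod_nonneg) (auto intro: order_trans)
  also have "\<dots> = S * P"
    unfolding S_def P_def sum_distrib_right using insert.hyps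
    by (intro sum.cong refl) (simp add: prod.remove mult.assoc)
  finally have "T \<le> S * P" .
  have "0 \<le> S" unfolding S_def using insert.prems by (intro sum_nonneg) auto
  then have "0 \<le> (1 - a x) * p x + a x * q x"
    using x \<open>a x + S \<le> 1\<close> by (intro add_nonneg_nonneg mult_nonneg_nonneg) auto
  have T_insert:
    "(\<Sum>j\<in>insert x I. a j * q j * prod p (insert x I - {j})) = a x * q x * P + p x * T"
  proof -
    have "(\<Sum>j\<in>I. a j * q j * prod p (insert x I - {j}))
        = (\<Sum>j\<in>I. p x * (a j * q j * prod p (I - {j})))"
    proof (intro sum.cong refl)
      fix j assume "j \<in> I"
      then have "insert x I - {j} = insert x (I - {j})" using insert.hyps by auto
      then show "a j * q j * prod p (insert x I - {j}) = p x * (a j * q j * prod p (I - {j}))"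
        using insert.hyps by simp
    qed
    then show ?thesis using insert.hyps by (simp add: P_def T_def sum_distrib_left)
  qed
  have "(1 - sum a (insert x I)) * prod p (insert x I)
      + (\<Sum>j\<in>insert x I. a j * q j * prod p (insert x I - {j}))
      = ((1 - a x) * p x + a x * q x) * ((1 - S) * P + T) - a x * (p x - q x) * (S * P - T)"
    using insert.hyps T_insert by (simp add: S_def P_def algebra_simps)
  also have "\<dots> \<le> ((1 - a x) * p x + a x * q x) * ((1 - S) * P + T)"
    using x \<open>T \<le> S * P\<close> by simp
  also have "\<dots> \<le> ((1 - a x) * p x + a x * q x) * (\<Prod>k\<in>I. (1 - a k) * p k + a k * q k)"
    using IH \<open>0 \<le> (1 - a x) * p x + a x * q x\<close> by (rule mult_left_mono)
  also have "\<dots> = (\<Prod>k\<in>insert x I. (1 - a k) * p k + a k * q k)" using insert.hyps by simp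
  finally show ?case .
qed

lemma stochastic_entry_le_one:
  fixes r :: "nat \<Rightarrow> real"
  assumes "\<forall>j<n. 0 \<le> r j" "(\<Sum>j<n. r j) = 1" "j < n"
  shows "r j \<le> 1"
  using member_le_sum[of j "{..<n}" r] assms by auto

lemma prod_column_factors_transpose:
  fixes B :: "nat \<Rightarrow> nat \<Rightarrow> real"
  assumes "b < Suc m" "m < n"
  defines "t \<equiv> Transposition.transpose m b"
  shows "(\<Prod>k<n. if k < m then prob_at_most_one (\<lambda>i. B i (t k)) m else (\<Prod>i<m. 1 - B i (t k)))
    = (\<Prod>i<m. 1 - B i b) * (\<Prod>k\<in>{..<n} - {b}.
        if k < Suc m then prob_at_most_one (\<lambda>i. B i k) m else (\<Prod>i<m. 1 - B i k))"
proof -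
  have t: "t permutes {..<n}" unfolding t_def using assms by (intro permutes_swap_id) auto
  have "(\<Prod>k<n. if k < m then prob_at_most_one (\<lambda>i. B i (t k)) m else (\<Prod>i<m. 1 - B i (t k)))
      = (\<Prod>k<n. if t k < m then prob_at_most_one (\<lambda>i. B i k) m else (\<Prod>i<m. 1 - B i k))"
    using prod.permute[OF t, of "\<lambda>k. if t k < m then prob_at_most_one (\<lambda>i. B i k) m
        else (\<Prod>i<m. 1 - B i k)"]
    unfolding t_def by (simp add: comp_def)
  also have "\<dots> = (\<Prod>k<n. if k = b then (\<Prod>i<m. 1 - B i b)
      else if k < Suc m then prob_at_most_one (\<lambda>i. B i k) m else (\<Prod>i<m. 1 - B i k))"
    using assms(1) by (intro prod.cong refl) (auto simp: t_def Transposition.transpose_def)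
  also have "\<dots> = (\<Prod>i<m. 1 - B i b) * (\<Prod>k\<in>{..<n} - {b}.
      if k < Suc m then prob_at_most_one (\<lambda>i. B i k) m else (\<Prod>i<m. 1 - B i k))"
    using assms by (subst prod.remove[of _ b]) (auto intro!: prod.cong)
  finally show ?thesis .
qed

text \<open>Expanding along row m and swapping the chosen column b
  into position m leaves the first m rows of a matrix of the same kind, to which the induction
  hypothesis applies; in that bound column b carries the factor without row m.\<close>
lemma per_le_prod_column_factors:
  assumes "m \<le> n" "\<And>i. i < m \<Longrightarrow> (\<forall>j<n. 0 \<le> B i j) \<and> (\<Sum>j<n. B i j) = 1"
  shows "per m B
    \<le> (\<Prod>k<n. if k < m then prob_at_most_one (\<lambda>i. B i k) m else (\<Prod>i<m. 1 - B i k))"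
  using assms
proof (induction m arbitrary: B)
  case 0
  then show ?case by (simp add: per_0)
next
  case (Suc m)
  have "m < n" using Suc.prems by simp
  have ent: "0 \<le> B i j \<and> B i j \<le> 1" if "i < Suc m" "j < n" for i j
    using Suc.prems(2)[OF that(1)] stochastic_entry_le_one[of n "B i"] that by auto
  define a where "a k = B m k" for k
  define p where
    "p k = (if k < Suc m then prob_at_most_one (\<lambda>i. B i k) m else (\<Prod>i<m. 1 - B i k))" for k
  define q where "q k = (if k < Suc m then (\<Prod>i<m. 1 - B i k) else 0)" for k
  have apq: "0 \<le> a k \<and> 0 \<le> q k \<and> q k \<le> p k" if "k < n" for k
    using ent[of m k] ent[of _ k] that
      prod_one_minus_le_prob_at_most_one[of m "\<lambda>i. B i k"] prod_nonneg[of "{..<m}" "\<lambda>i. 1 - B i k"]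
    by (auto simp: a_def p_def q_def)
  have "sum a {..<n} = 1" using Suc.prems(2)[of m] by (simp add: a_def)
  have swap: "per m (\<lambda>i j. B i (Transposition.transpose m b j)) \<le> q b * prod p ({..<n} - {b})"
    if "b < Suc m" for b
  proof -
    let ?t = "Transposition.transpose m b"
    have t: "?t permutes {..<n}" using that \<open>m < n\<close> by (intro permutes_swap_id) auto
    have "(\<forall>j<n. 0 \<le> B i (?t j)) \<and> (\<Sum>j<n. B i (?t j)) = 1" if "i < m" for i
      using ent[of i] that permutes_in_image[OF t] Suc.prems(2)[of i]
        sum.permute[OF t, of "\<lambda>j. B i j"] by (auto simp: comp_def)
    then have "per m (\<lambda>i j. B i (?t j)) \<le> (\<Prod>k<n. if k < m then prob_at_most_one (\<lambda>i. B i (?t k)) m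
        else (\<Prod>i<m. 1 - B i (?t k)))"
      using Suc.IH \<open>m < n\<close> by simp
    also have "\<dots> = q b * prod p ({..<n} - {b})"
      unfolding p_def q_def using that \<open>m < n\<close> by (simp add: prod_column_factors_transpose)
    finally show ?thesis .
  qed
  have "per (Suc m) B = (\<Sum>b<Suc m. a b * per m (\<lambda>i j. B i (Transposition.transpose m b j)))"
    by (simp add: per_Suc a_def)
  also have "\<dots> \<le> (\<Sum>b<Suc m. a b * (q b * prod p ({..<n} - {b})))"
    using swap apq \<open>m < n\<close> by (intro sum_mono mult_left_mono) auto
  also have "\<dots> = (\<Sum>b<n. a b * q b * prod p ({..<n} - {b}))"
    unfolding mult.assoc using \<open>m < n\<close> by (intro sum.mono_neutral_left) (auto simp: q_def)
  also have "\<dots> = (1 - sum a {..<n}) * prod p {..<n} + (\<Sum>b<n. a b * q b * prod p ({..<n} - {b}))"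
    using \<open>sum a {..<n} = 1\<close> by simp
  also have "\<dots> \<le> (\<Prod>k<n. (1 - a k) * p k + a k * q k)"
    using apq \<open>sum a {..<n} = 1\<close> by (intro single_choice_le_independent_choice) auto
  also have "\<dots> = (\<Prod>k<n. if k < Suc m then prob_at_most_one (\<lambda>i. B i k) (Suc m)
      else (\<Prod>i<Suc m. 1 - B i k))"
    by (intro prod.cong refl) (auto simp: a_def p_def q_def)
  finally show ?case .
qed

theorem theorem1p3:
  fixes n :: nat and A :: "nat \<Rightarrow> nat \<Rightarrow> real"
  assumes nonneg: "\<And>i j. i < n \<Longrightarrow> j < n \<Longrightarrow> A i j \<ge> 0"
    and rowsum: "\<And>i. i < n \<Longrightarrow> (\<Sum>j<n. A i j) = 1"
  shows "per n A \<le> 2 ^ n * (\<Prod>i<n. \<Prod>j<n. rpow (1 - A i j) (1 - A i j))"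
proof -
  have col: "0 \<le> A i k \<and> A i k \<le> 1" if "i < n" "k < n" for i k
    using nonneg rowsum stochastic_entry_le_one[of n "A i" k] that by auto
  have "(\<Sum>k<n. \<Sum>i<n. A i k) = n"
    using rowsum by (subst sum.swap) simp
  then have exponent: "(\<Sum>k<n. ((\<Sum>i<n. A i k) - 1) / 2) = 0"
    by (simp add: sum_divide_distrib[symmetric] sum_subtractf)
  have "per n A \<le> (\<Prod>k<n. prob_at_most_one (\<lambda>i. A i k) n)"
    using per_le_prod_column_factors[of n n A] nonneg rowsum by simp
  also have "\<dots> \<le> (\<Prod>k<n. 2 * exp (((\<Sum>i<n. A i k) - 1) / 2) * (\<Prod>i<n. rpow (1 - A i k) (1 - A i k)))"
    using col by (intro prod_mono conjI prob_at_most_one_nonneg prob_at_most_one_le) auto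
  also have "\<dots> = 2 ^ n * exp (\<Sum>k<n. ((\<Sum>i<n. A i k) - 1) / 2)
      * (\<Prod>k<n. \<Prod>i<n. rpow (1 - A i k) (1 - A i k))"
    by (simp add: prod.distrib exp_sum)
  also have "\<dots> = 2 ^ n * (\<Prod>i<n. \<Prod>j<n. rpow (1 - A i j) (1 - A i j))"
    unfolding exponent by (subst prod.swap) simp
  finally show ?thesis .
qed

end
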